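(* Let $b \in \mathbb{Z}_{>0}$, let $\ell \ge 0$ be an integer, and let $X_b = \{0,1\}^\ell \times \{0,1,\dots,b\} \subseteq \mathbb{Z}^{\ell+1}$. Then the polyhedron $P = \{x \in \mathbb{R}^{\ell+1} : x_k \le 1 + \sum_{i=k+1}^{\ell+1}(b+1)^{-i}x_i \text{ for } k\in\{1,\dots,\ell\},\ x_{\ell+1}\le b,\ x_1 + \sum_{i=2}^{\ell+1}(b+1)^{-i}x_i \ge 0\}$ satisfies $P \cap \mathbb{Z}^{\ell+1} = X_b$. In particular, $\mathrm{rc}(X_b) \le \ell+2$.
   Context: $\mathrm{rc}(X)$ is the smallest number of facets of a polyhedron $P\subseteq\mathbb{R}^n$ with $P \cap \mathbb{Z}^n = X$. *)

theory Defs
  imports "HOL-Analysis.Analysis"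
begin

definition int_points :: "(real^'n) set" where
  "int_points = {x. \<forall>i. x $ i \<in> \<int>}"

definition rc :: "(real^'n) set \<Rightarrow> nat" where
  "rc X = (LEAST m. \<exists>P. polyhedron P \<and> P \<inter> int_points = X \<and> card {F. F facet_of P} = m)"

end

theory Submission
  imports Defs
begin

text \<open>Read the coordinates \<open>x\<^sub>1, \<dots>, x\<^bsub>l+1\<^esub>\<close> as the digits of a number in base \<open>B = b + 1\<close>,
  the digit \<open>x\<^sub>k\<close> having place value \<open>B\<^sup>-\<^sup>k\<close> (except that \<open>x\<^sub>1\<close> enters the last
  constraint with weight \<open>1\<close>). For an integer point of \<open>P\<close>, a downward induction shows that
  all digits are at most \<open>B - 1\<close>; then every tail \<open>\<Sum>\<^sub>i\<^sub>>\<^sub>k x\<^sub>i B\<^sup>-\<^sup>i\<close> is smaller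
  than \<open>B\<^sup>-\<^sup>k\<close>, and the constraint \<open>x\<^sub>k \<le> 1 + tail\<close> forces \<open>x\<^sub>k \<le> 1\<close>.
  Conversely the last constraint says that the first weighted partial sum is nonnegative, and this
  propagates upwards: if \<open>x\<^sub>k B\<^sup>-\<^sup>k + tail \<ge> 0\<close> with \<open>tail < B\<^sup>-\<^sup>k\<close>, then
  \<open>x\<^sub>k \<in> {0, 1}\<close> and in both cases the tail is again nonnegative.
  Since \<open>P\<close> is cut out by \<open>l + 2\<close> halfspaces and a polyhedron has at most as many facets
  as halfspaces in any of its descriptions, \<open>rc(X\<^sub>b) \<le> l + 2\<close>.\<close>

lemma card_facets_le_card_halfspaces:
  fixes S :: "'a::euclidean_space set"
  assumes "finite F0" and "S = \<Inter>F0"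
    and "\<forall>h\<in>F0. \<exists>a b. a \<noteq> 0 \<and> h = {x. a \<bullet> x \<le> b}"
  shows "card {C. C facet_of S} \<le> card F0"
proof -
  let ?M = "{F. F \<subseteq> F0 \<and> S = affine hull S \<inter> \<Inter>F}"
  have "F0 \<in> ?M"
    using assms(2) hull_subset[of S] by blast
  then obtain F where "F \<in> ?M" and least: "\<And>G. G \<in> ?M \<Longrightarrow> card F \<le> card G"
    using ex_has_least_nat[of "\<lambda>F. F \<in> ?M" F0 card] by blast
  then have "F \<subseteq> F0" and seq: "S = affine hull S \<inter> \<Inter>F"
    by blast+
  then have "finite F"
    using assms(1) finite_subset by blast
  have "\<forall>h\<in>F. \<exists>a b. a \<noteq> 0 \<and> h = {x. a \<bullet> x \<le> b}"
    using assms(3) \<open>F \<subseteq> F0\<close> by blast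
  then obtain a b where ab: "\<And>h. h \<in> F \<Longrightarrow> a h \<noteq> 0 \<and> h = {x. a h \<bullet> x \<le> b h}"
    by metis
  have minimal: "S \<subset> affine hull S \<inter> \<Inter>F'" if "F' \<subset> F" for F'
  proof -
    have "S \<noteq> affine hull S \<inter> \<Inter>F'"
    proof
      assume "S = affine hull S \<inter> \<Inter>F'"
      then have "card F \<le> card F'"
        using least \<open>F \<subseteq> F0\<close> that by blast
      moreover have "card F' < card F"
        using psubset_card_mono[OF \<open>finite F\<close> that] .
      ultimately show False
        by linarith
    qed
    moreover have "S \<subseteq> affine hull S \<inter> \<Inter>F'"
      using seq that by blast
    ultimately show ?thesis
      by blast
  qed
  have "{C. C facet_of S} \<subseteq> (\<lambda>h. S \<inter> {x. a h \<bullet> x = b h}) ` F"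
    by (auto simp: facet_of_polyhedron_explicit[OF \<open>finite F\<close> seq ab minimal])
  then have "card {C. C facet_of S} \<le> card ((\<lambda>h. S \<inter> {x. a h \<bullet> x = b h}) ` F)"
    using \<open>finite F\<close> by (intro card_mono) auto
  also have "\<dots> \<le> card F"
    using \<open>finite F\<close> by (rule card_image_le)
  also have "\<dots> \<le> card F0"
    using assms(1) \<open>F \<subseteq> F0\<close> by (rule card_mono)
  finally show ?thesis .
qed

lemma card_facets_Inter_halfspaces_le:
  fixes a :: "'i \<Rightarrow> 'a::euclidean_space"
  assumes "finite K"
  shows "card {C. C facet_of {x. \<forall>k\<in>K. a k \<bullet> x \<le> \<beta> k}} \<le> card K"
proof (cases "\<exists>k\<in>K. a k = 0 \<and> \<beta> k < 0")
  case True
  then have empty: "{x. \<forall>k\<in>K. a k \<bullet> x \<le> \<beta> k} = {}"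
    by force
  show ?thesis
    by (subst empty) simp
next
  case False
  define K' where "K' = {k\<in>K. a k \<noteq> 0}"
  have "finite K'"
    using assms by (simp add: K'_def)
  have "{x. \<forall>k\<in>K. a k \<bullet> x \<le> \<beta> k} = \<Inter>((\<lambda>k. {x. a k \<bullet> x \<le> \<beta> k}) ` K')"
    using False by (auto simp: K'_def) (metis inner_zero_left not_le)
  then have "card {C. C facet_of {x. \<forall>k\<in>K. a k \<bullet> x \<le> \<beta> k}}
      \<le> card ((\<lambda>k. {x. a k \<bullet> x \<le> \<beta> k}) ` K')"
    using \<open>finite K'\<close> by (intro card_facets_le_card_halfspaces) (auto simp: K'_def)
  also have "\<dots> \<le> card K'"
    using \<open>finite K'\<close> by (rule card_image_le)
  also have "\<dots> \<le> card K"
    using assms by (auto simp: K'_def intro: card_mono)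
  finally show ?thesis .
qed

lemma rc_le_card_halfspaces:
  fixes a :: "'i \<Rightarrow> real^'n"
  assumes "finite K" and "{x. \<forall>k\<in>K. a k \<bullet> x \<le> \<beta> k} \<inter> int_points = X"
  shows "rc X \<le> card K"
proof -
  let ?P = "{x. \<forall>k\<in>K. a k \<bullet> x \<le> \<beta> k}"
  have "?P = \<Inter>((\<lambda>k. {x. a k \<bullet> x \<le> \<beta> k}) ` K)"
    by auto
  then have "polyhedron ?P"
    using assms(1) by (auto intro: polyhedron_halfspace_le)
  then have "rc X \<le> card {C. C facet_of ?P}"
    unfolding rc_def using assms(2) by (intro Least_le) blast
  also have "\<dots> \<le> card K"
    using assms(1) by (rule card_facets_Inter_halfspaces_le)
  finally show ?thesis .
qed

lemma sum_max_digits: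
  fixes B :: real
  assumes "B \<noteq> 0" and "j \<le> m"
  shows "(\<Sum>i=Suc j..m. (B - 1) / B ^ i) = 1 / B ^ j - 1 / B ^ m"
  using assms(2)
proof (induction m rule: dec_induct)
  case base
  then show ?case
    by simp
next
  case (step n)
  have "(B - 1) / B ^ Suc n = 1 / B ^ n - 1 / B ^ Suc n"
    using assms(1) by (simp add: field_simps)
  then show ?case
    using step by (simp add: sum.cl_ivl_Suc)
qed

lemma sum_digits_less:
  fixes d :: "nat \<Rightarrow> real" and B :: real
  assumes "1 < B" and "\<forall>i\<in>{Suc j..m}. d i \<le> B - 1"
  shows "(\<Sum>i=Suc j..m. d i / B ^ i) < 1 / B ^ j"
proof (cases "j \<le> m")
  case True
  have "(\<Sum>i=Suc j..m. d i / B ^ i) \<le> (\<Sum>i=Suc j..m. (B - 1) / B ^ i)"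
    using assms by (intro sum_mono divide_right_mono) auto
  also have "\<dots> = 1 / B ^ j - 1 / B ^ m"
    using assms(1) True by (intro sum_max_digits) auto
  also have "\<dots> < 1 / B ^ j"
    using assms(1) by simp
  finally show ?thesis .
next
  case False
  then show ?thesis
    using assms(1) by simp
qed

lemma binary_digit_tail_nonneg:
  fixes z w S :: real
  assumes "z \<in> \<int>" and "z \<le> 1" and "0 < w" and "S < w" and "z \<le> 1 + S"
    and "0 \<le> z * w + S"
  shows "z \<in> {0, 1}" and "0 \<le> S"
proof -
  have "(-1) * w < z * w"
    using assms(4,6) by linarith
  then have "-1 < z"
    using assms(3) mult_less_cancel_right_pos[of w "-1" z] by simp
  then show "z \<in> {0, 1}"
    using assms(1,2) by (elim Ints_cases) auto
  then show "0 \<le> S"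
    using assms(5,6) by auto
qed

lemma digit_constraints_imp_binary:
  fixes d :: "nat \<Rightarrow> real" and b :: int
  defines "B \<equiv> of_int b + 1"
  assumes "0 < b" and ints: "\<forall>i\<in>{1..l+1}. d i \<in> \<int>"
    and upper: "\<forall>k\<in>{1..l}. d k \<le> 1 + (\<Sum>i=k+1..l+1. d i / B ^ i)"
    and last: "d (l+1) \<le> of_int b"
    and lower: "0 \<le> d 1 + (\<Sum>i=2..l+1. d i / B ^ i)"
  shows "(\<forall>k\<in>{1..l}. d k \<in> {0, 1}) \<and> 0 \<le> d (l+1)"
proof -
  define T where "T k = (\<Sum>i=k..l+1. d i / B ^ i)" for k
  have "1 < B" and "2 \<le> B"
    using \<open>0 < b\<close> by (simp_all add: B_def)
  have tail_less: "T (Suc j) < 1 / B ^ j" if "\<forall>i\<in>{Suc j..l}. d i \<le> 1" for j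
    unfolding T_def using \<open>1 < B\<close>
  proof (rule sum_digits_less)
    show "\<forall>i\<in>{Suc j..l+1}. d i \<le> B - 1"
      using that last \<open>2 \<le> B\<close> by (force simp: B_def le_Suc_eq)
  qed
  have "\<forall>i\<in>{k..l}. d i \<le> 1" if "1 \<le> k" and "k \<le> l + 1" for k
    using that(2)
  proof (induction k rule: inc_induct)
    case base
    then show ?case
      by simp
  next
    case (step n)
    have "d n \<le> 1 + T (Suc n)"
      using upper that(1) step.hyps by (simp add: T_def)
    moreover have "1 / B ^ n \<le> 1"
      using \<open>1 < B\<close> by simp
    ultimately have "d n < 2"
      using tail_less[OF step.IH] by linarith
    moreover have "d n \<in> \<int>"
      using ints that(1) step.hyps by simp
    ultimately have "d n \<le> 1"
      by (elim Ints_cases) simp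
    then show ?case
      using step.IH by (metis atLeastAtMost_iff le_antisym not_less_eq_eq)
  qed
  then have digits_le_one: "\<forall>i\<in>{1..l}. d i \<le> 1"
    by (metis le_add2 order_refl)
  have digit_step: "d k \<in> {0, 1} \<and> 0 \<le> T (Suc k)"
    if "k \<in> {1..l}" and "1 / B ^ k \<le> w" and "0 \<le> d k * w + T (Suc k)" for k w
  proof -
    have "T (Suc k) < w"
      using tail_less[of k] digits_le_one that(2) by force
    moreover have "0 < 1 / B ^ k"
      using \<open>1 < B\<close> by simp
    then have "0 < w"
      using that(2) by linarith
    ultimately show ?thesis
      using binary_digit_tail_nonneg[of "d k" w "T (Suc k)"] that(1,3) ints digits_le_one upper
      by (simp add: T_def)
  qed
  have prefix: "0 \<le> T (Suc k) \<and> (\<forall>i\<in>{1..k}. d i \<in> {0, 1})" if "1 \<le> k" and "k \<le> l" for k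
    using that
  proof (induction k rule: dec_induct)
    case base
    show ?case
      using digit_step[of 1 1] lower \<open>1 < B\<close> base by (simp add: T_def numeral_2_eq_2)
  next
    case (step n)
    have "T (Suc n) = d (Suc n) * (1 / B ^ Suc n) + T (Suc (Suc n))"
      unfolding T_def using step.prems by (simp add: sum.atLeast_Suc_atMost)
    then show ?case
      using digit_step[of "Suc n" "1 / B ^ Suc n"] step by (auto simp: le_Suc_eq)
  qed
  show ?thesis
  proof (cases "l = 0")
    case True
    then show ?thesis
      using lower by simp
  next
    case False
    have "0 \<le> d (l+1) / B ^ (l+1)"
      using prefix[of l] False by (simp add: T_def)
    moreover have "0 < B ^ (l+1)"
      using \<open>1 < B\<close> by simp
    ultimately have "0 \<le> d (l+1)"
      by (simp add: zero_le_divide_iff)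
    then show ?thesis
      using prefix[of l] False by simp
  qed
qed

lemma integer_solutions_digit_constraints:
  fixes d :: "nat \<Rightarrow> real" and b :: int
  assumes "0 < b"
  shows "(\<forall>i\<in>{1..l+1}. d i \<in> \<int>)
      \<and> (\<forall>k\<in>{1..l}. d k \<le> 1 + (\<Sum>i=k+1..l+1. d i / (of_int b + 1) ^ i))
      \<and> d (l+1) \<le> of_int b
      \<and> 0 \<le> d 1 + (\<Sum>i=2..l+1. d i / (of_int b + 1) ^ i)
    \<longleftrightarrow> (\<forall>k\<in>{1..l}. d k \<in> {0, 1}) \<and> (\<exists>j::int. 0 \<le> j \<and> j \<le> b \<and> d (l+1) = of_int j)"
    (is "?ints \<and> ?upper \<and> ?last \<and> ?lower \<longleftrightarrow> ?binary \<and> ?top")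
proof
  assume "?ints \<and> ?upper \<and> ?last \<and> ?lower"
  then have "?binary" and "0 \<le> d (l+1)" and "d (l+1) \<le> of_int b" and "d (l+1) \<in> \<int>"
    using digit_constraints_imp_binary[OF assms, of l d] by auto
  then show "?binary \<and> ?top"
    by (auto elim!: Ints_cases)
next
  assume "?binary \<and> ?top"
  then have binary: "?binary" and top: "?top"
    by blast+
  then obtain j where "0 \<le> j" and "j \<le> b" and "d (l+1) = of_int j"
    by blast
  have digit: "0 \<le> d i \<and> d i \<in> \<int>" if "i \<in> {1..l+1}" for i
  proof (cases "i \<le> l")
    case True
    then have "d i \<in> {0, 1}"
      using binary that by simp
    then show ?thesis
      by auto
  next
    case False
    then have "i = l + 1"
      using that by simp
    then show ?thesis
      using \<open>0 \<le> j\<close> \<open>d (l+1) = of_int j\<close> by simp_all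
  qed
  have tail_nonneg: "0 \<le> (\<Sum>i=m..l+1. d i / (of_int b + 1) ^ i)" if "1 \<le> m" for m
    using digit that assms by (intro sum_nonneg) auto
  have "?upper"
  proof
    fix k assume "k \<in> {1..l}"
    then have "d k \<in> {0, 1}"
      using binary by blast
    then have "d k \<le> 1"
      by auto
    then show "d k \<le> 1 + (\<Sum>i=k+1..l+1. d i / (of_int b + 1) ^ i)"
      using tail_nonneg[of "k+1"] by linarith
  qed
  moreover have "?lower"
    using digit[of 1] tail_nonneg[of 2] by simp
  ultimately show "?ints \<and> ?upper \<and> ?last \<and> ?lower"
    using digit \<open>j \<le> b\<close> \<open>d (l+1) = of_int j\<close> by simp
qed

lemma rc_digit_polyhedron_le:
  fixes c :: "nat \<Rightarrow> 'n::finite" and B \<beta> :: real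
  shows "rc ({x :: real^'n. (\<forall>k\<in>{1..l}. x $ c k \<le> 1 + (\<Sum>i=k+1..l+1. x $ c i / B ^ i))
      \<and> x $ c (l+1) \<le> \<beta> \<and> x $ c 1 + (\<Sum>i=2..l+1. x $ c i / B ^ i) \<ge> 0} \<inter> int_points) \<le> l + 2"
proof -
  \<comment> \<open>For \<open>k = l + 1\<close> the sum is empty, so \<open>a (l + 1)\<close> is the unit vector at \<open>c (l + 1)\<close>.\<close>
  define a :: "nat \<Rightarrow> real^'n" where
    "a k = (if k = 0 then - axis (c 1) 1 - (\<Sum>i=2..l+1. axis (c i) (1 / B ^ i))
            else axis (c k) 1 - (\<Sum>i=k+1..l+1. axis (c i) (1 / B ^ i)))" for k
  define r where "r k = (if k = 0 then 0 else if k = l+1 then \<beta> else 1)" for k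
  have inner_sum: "(\<Sum>i\<in>I. axis (c i) (1 / B ^ i)) \<bullet> x = (\<Sum>i\<in>I. x $ c i / B ^ i)"
    for I and x :: "real^'n"
    by (simp add: inner_sum_left inner_axis')
  have inner_a: "a k \<bullet> x = (if k = 0 then - (x $ c 1 + (\<Sum>i=2..l+1. x $ c i / B ^ i))
      else x $ c k - (\<Sum>i=k+1..l+1. x $ c i / B ^ i))" for k x
    by (simp add: a_def inner_diff_left inner_sum inner_axis' del: sum.cl_ivl_Suc)
  have zero: "a 0 \<bullet> x \<le> r 0 \<longleftrightarrow> x $ c 1 + (\<Sum>i=2..l+1. x $ c i / B ^ i) \<ge> 0" for x
    by (auto simp: inner_a r_def simp del: sum.cl_ivl_Suc)
  have top: "a (l+1) \<bullet> x \<le> r (l+1) \<longleftrightarrow> x $ c (l+1) \<le> \<beta>" for x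
    by (simp add: inner_a r_def)
  have middle: "a k \<bullet> x \<le> r k \<longleftrightarrow> x $ c k \<le> 1 + (\<Sum>i=k+1..l+1. x $ c i / B ^ i)"
    if "k \<in> {1..l}" for k x
    using that by (auto simp: inner_a r_def simp del: sum.cl_ivl_Suc)
  have indices: "{0..l+1} = insert 0 (insert (l+1) {1..l})"
    by auto
  have "{x :: real^'n. (\<forall>k\<in>{1..l}. x $ c k \<le> 1 + (\<Sum>i=k+1..l+1. x $ c i / B ^ i))
      \<and> x $ c (l+1) \<le> \<beta> \<and> x $ c 1 + (\<Sum>i=2..l+1. x $ c i / B ^ i) \<ge> 0}
    = {x. \<forall>k\<in>{0..l+1}. a k \<bullet> x \<le> r k}"
    unfolding indices ball_simps zero top using middle by blast
  then show ?thesis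
    using rc_le_card_halfspaces[of "{0..l+1}" a r] by simp
qed

theorem lemma5p1:
  fixes b :: int and l :: nat and c :: "nat \<Rightarrow> 'n::finite"
  assumes "b > 0"
    and "bij_betw c {1..l+1} (UNIV :: 'n set)"
  defines "X \<equiv> {x :: real^'n. (\<forall>k\<in>{1..l}. x $ c k \<in> {0, 1})
                   \<and> (\<exists>j::int. 0 \<le> j \<and> j \<le> b \<and> x $ c (l+1) = of_int j)}"
    and "P \<equiv> {x :: real^'n.
              (\<forall>k\<in>{1..l}. x $ c k \<le> 1 + (\<Sum>i=k+1..l+1. x $ c i / (of_int b + 1) ^ i))
            \<and> x $ c (l+1) \<le> of_int b
            \<and> x $ c 1 + (\<Sum>i=2..l+1. x $ c i / (of_int b + 1) ^ i) \<ge> 0}"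
  shows "P \<inter> int_points = X \<and> rc X \<le> l + 2"
proof -
  have "\<forall>j. \<exists>i\<in>{1..l+1}. j = c i"
    using bij_betw_imp_surj_on[OF assms(2)] by blast
  then have int_points_iff: "x \<in> int_points \<longleftrightarrow> (\<forall>i\<in>{1..l+1}. x $ c i \<in> \<int>)" for x :: "real^'n"
    unfolding int_points_def by (auto; metis)
  have "x \<in> P \<inter> int_points \<longleftrightarrow> x \<in> X" for x
    using integer_solutions_digit_constraints[OF assms(1), of l "\<lambda>i. x $ c i"] int_points_iff[of x]
    unfolding P_def X_def Int_iff mem_Collect_eq by blast
  then have "P \<inter> int_points = X"
    by blast
  moreover have "rc (P \<inter> int_points) \<le> l + 2"
    unfolding P_def by (rule rc_digit_polyhedron_le)
  ultimately show ?thesis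
    by simp
qed

end
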